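(* Let $X$ be a finitely triangulable space and $k\ge0$. Then the image $\{[H_k(f;\mathbb{k})]: f\in C(X,\mathbb{R}^n)\}$ of $C(X,\mathbb{R}^n)$ in $\mathbf{bg}_n$ is separable (with respect to the interleaving distance).
   Context: Fix a field $\mathbb{k}$ (of arbitrary cardinality). For continuous $f:X\to\mathbb{R}^n$, $H_k(f;\mathbb{k})$ is the $n$-parameter persistence module $s\mapsto H_k(\{x\in X:f(x)\ll s\};\mathbb{k})$ (singular homology, maps induced by inclusion), where $s\ll t$ means $s_i<t_i$ for all $i$. An $n$-parameter persistence module is a functor $\mathbf{R}^n\to\mathbf{Vect}_{\mathbb{k}}$ ($\mathbf{R}^n$ with componentwise order); q-tame if $V_{s,t}$ has finite rank for $s\ll t$; ephemeral if $V_{s,t}=0$ for $s\ll t$. The observable category is the Serre quotient of persistence modules by ephemeral ones; $\mathcal{Q}_n$ is the set of isomorphism classes of q-tame objects of it with the interleaving distance $d_I$ (infimum of $\varepsilon\ge0$ admitting $f:V\to W[\varepsilon]$, $g:W\to V[\varepsilon]$ with $g[\varepsilon]f$, $f[\varepsilon]g$ equal to the structure-map morphisms to the $2\varepsilon$-shifts; $V[\varepsilon]_s=V_{s+\varepsilon}$). A module is finitely presentable if it is a cokernel of a morphism between finite direct sums of modules $\mathsf P_s$ ($\mathbb{k}$ on $\{t\ge s\}$, $0$ elsewhere, identity structure maps). $\mathbf{bg}_n$ is the closure in $\mathcal{Q}_n$ of the classes of finitely presentable modules; the modules $H_k(f;\mathbb{k})$ define elements of $\mathbf{bg}_n$. 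*)

theory Defs
  imports "HOL-Analysis.Analysis" "HOL-Homology.Homology"
begin

definition finitely_triangulable :: "'e::euclidean_space itself \<Rightarrow> 'x topology \<Rightarrow> bool" where
  "finitely_triangulable E X \<longleftrightarrow>
     (\<exists>\<T> :: 'e set set. triangulation \<T> \<and> X homeomorphic_space subtopology euclidean (\<Union>\<T>))"

type_synonym ('x, 'k) kchain = "((nat \<Rightarrow> real) \<Rightarrow> 'x) \<Rightarrow> 'k"

definition kchains :: "nat \<Rightarrow> 'x topology \<Rightarrow> ('x, 'k::field) kchain set" where
  "kchains p X = {c. finite {\<sigma>. c \<sigma> \<noteq> 0} \<and> (\<forall>\<sigma>. c \<sigma> \<noteq> 0 \<longrightarrow> singular_simplex p X \<sigma>)}"

definition kbd :: "nat \<Rightarrow> ('x, 'k::field) kchain \<Rightarrow> ('x, 'k) kchain" where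
  "kbd p c = (if p = 0 then (\<lambda>_. 0) else
     (\<lambda>\<tau>. \<Sum>\<sigma>\<in>{\<sigma>. c \<sigma> \<noteq> 0}. \<Sum>i\<le>p. if singular_face p i \<sigma> = \<tau> then (-1) ^ i * c \<sigma> else 0))"

definition kcycles :: "nat \<Rightarrow> 'x topology \<Rightarrow> ('x, 'k::field) kchain set" where
  "kcycles p X = {c \<in> kchains p X. kbd p c = (\<lambda>_. 0)}"

definition kboundaries :: "nat \<Rightarrow> 'x topology \<Rightarrow> ('x, 'k::field) kchain set" where
  "kboundaries p X = kbd (Suc p) ` kchains (Suc p) X"

text \<open>A persistence module indexed by real^'n is represented by a pair (Z, B) of families of
subspaces of an ambient space of 'k-valued functions, B s \<subseteq> Z s, with V_s = Z s / B s
and structure maps induced by the identity. A natural transformation V \<rightarrow> W is encoded by a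
family of maps on representatives that induces well-defined linear maps of the quotients
and commutes with the structure maps (everything modulo the target's B).\<close>

definition qscale :: "'k::field \<Rightarrow> ('b \<Rightarrow> 'k) \<Rightarrow> ('b \<Rightarrow> 'k)" where
  "qscale c x = (\<lambda>b. c * x b)"

definition qadd :: "('b \<Rightarrow> 'k::field) \<Rightarrow> ('b \<Rightarrow> 'k) \<Rightarrow> ('b \<Rightarrow> 'k)" where
  "qadd x y = (\<lambda>b. x b + y b)"

definition qsub :: "('b \<Rightarrow> 'k::field) \<Rightarrow> ('b \<Rightarrow> 'k) \<Rightarrow> ('b \<Rightarrow> 'k)" where
  "qsub x y = (\<lambda>b. x b - y b)"

definition vle :: "real^'n \<Rightarrow> real^'n \<Rightarrow> bool" where
  "vle s t \<longleftrightarrow> (\<forall>i. s $ i \<le> t $ i)"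

definition pm_hom ::
  "(real^'n \<Rightarrow> ('b \<Rightarrow> 'k::field) set) \<Rightarrow> (real^'n \<Rightarrow> ('b \<Rightarrow> 'k) set) \<Rightarrow>
   (real^'n \<Rightarrow> ('c \<Rightarrow> 'k) set) \<Rightarrow> (real^'n \<Rightarrow> ('c \<Rightarrow> 'k) set) \<Rightarrow>
   (real^'n \<Rightarrow> ('b \<Rightarrow> 'k) \<Rightarrow> ('c \<Rightarrow> 'k)) \<Rightarrow> bool" where
  "pm_hom Z B Z' B' \<phi> \<longleftrightarrow>
     (\<forall>s. \<forall>x\<in>Z s. \<phi> s x \<in> Z' s) \<and>
     (\<forall>s. \<forall>x\<in>B s. \<phi> s x \<in> B' s) \<and>
     (\<forall>s. \<forall>x\<in>Z s. \<forall>y\<in>Z s. qsub (\<phi> s (qadd x y)) (qadd (\<phi> s x) (\<phi> s y)) \<in> B' s) \<and>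
     (\<forall>s c. \<forall>x\<in>Z s. qsub (\<phi> s (qscale c x)) (qscale c (\<phi> s x)) \<in> B' s) \<and>
     (\<forall>s t. vle s t \<longrightarrow> (\<forall>x\<in>Z s. qsub (\<phi> t x) (\<phi> s x) \<in> B' t))"

definition shiftv :: "real \<Rightarrow> real^'n \<Rightarrow> real^'n" where
  "shiftv e s = s + (\<chi> i. e)"

text \<open>V and W are e-interleaved: f : V \<rightarrow> W[e], g : W \<rightarrow> V[e] with g[e] f and f[e] g
equal to the structure maps V \<rightarrow> V[2e], W \<rightarrow> W[2e].\<close>
definition interleaved ::
  "real \<Rightarrow> (real^'n \<Rightarrow> ('b \<Rightarrow> 'k::field) set) \<times> (real^'n \<Rightarrow> ('b \<Rightarrow> 'k) set) \<Rightarrow>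
   (real^'n \<Rightarrow> ('c \<Rightarrow> 'k) set) \<times> (real^'n \<Rightarrow> ('c \<Rightarrow> 'k) set) \<Rightarrow> bool" where
  "interleaved e V W \<longleftrightarrow>
     (\<exists>f g. pm_hom (fst V) (snd V) (\<lambda>s. fst W (shiftv e s)) (\<lambda>s. snd W (shiftv e s)) f \<and>
            pm_hom (fst W) (snd W) (\<lambda>s. fst V (shiftv e s)) (\<lambda>s. snd V (shiftv e s)) g \<and>
            (\<forall>s. \<forall>x\<in>fst V s. qsub (g (shiftv e s) (f s x)) x \<in> snd V (shiftv (2 * e) s)) \<and>
            (\<forall>s. \<forall>y\<in>fst W s. qsub (f (shiftv e s) (g s y)) y \<in> snd W (shiftv (2 * e) s)))"

definition interleaving_dist ::
  "(real^'n \<Rightarrow> ('b \<Rightarrow> 'k::field) set) \<times> (real^'n \<Rightarrow> ('b \<Rightarrow> 'k) set) \<Rightarrow>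
   (real^'n \<Rightarrow> ('c \<Rightarrow> 'k) set) \<times> (real^'n \<Rightarrow> ('c \<Rightarrow> 'k) set) \<Rightarrow> ereal" where
  "interleaving_dist V W = Inf {ereal e | e. e \<ge> 0 \<and> interleaved e V W}"

definition sublevel :: "'x topology \<Rightarrow> ('x \<Rightarrow> real^'n) \<Rightarrow> real^'n \<Rightarrow> 'x set" where
  "sublevel X f s = {x \<in> topspace X. \<forall>i. f x $ i < s $ i}"

definition PH ::
  "'k::field itself \<Rightarrow> nat \<Rightarrow> 'x topology \<Rightarrow> ('x \<Rightarrow> real^'n) \<Rightarrow>
   (real^'n \<Rightarrow> ('x, 'k) kchain set) \<times> (real^'n \<Rightarrow> ('x, 'k) kchain set)" where
  "PH K k X f = ((\<lambda>s. kcycles k (subtopology X (sublevel X f s))),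
                 (\<lambda>s. kboundaries k (subtopology X (sublevel X f s))))"

end

theory Submission
  imports Defs
begin

text \<open>If two maps agree up to e in every coordinate, then each sublevel set of one lies in the
e-shifted sublevel set of the other, so the identity on singular chains is an e-interleaving of
the persistent homology modules: the interleaving distance is at most the uniform distance.
Since X is homeomorphic to a compact polyhedron, the Stone-Weierstrass theorem for polynomials
with rational coefficients gives a countable family of maps that is uniformly dense.\<close>

datatype rat_poly = RConst rat | RVar nat | RAdd rat_poly rat_poly | RMult rat_poly rat_poly

instance rat_poly :: countable by countable_datatype

fun rat_poly_eval :: "rat_poly \<Rightarrow> 'e::euclidean_space \<Rightarrow> real" where
  "rat_poly_eval (RConst q) x = of_rat q"
| "rat_poly_eval (RVar i) x = x \<bullet> from_nat_into Basis i"
| "rat_poly_eval (RAdd p q) x = rat_poly_eval p x + rat_poly_eval q x"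
| "rat_poly_eval (RMult p q) x = rat_poly_eval p x * rat_poly_eval q x"

lemma continuous_on_rat_poly_eval: "continuous_on S (rat_poly_eval p)"
  by (induction p) (auto intro!: continuous_intros)

definition rat_poly_approximable :: "'e::euclidean_space set \<Rightarrow> ('e \<Rightarrow> real) \<Rightarrow> bool" where
  "rat_poly_approximable S g \<longleftrightarrow>
     (\<exists>ps. uniform_limit S (\<lambda>n. rat_poly_eval (ps n)) g sequentially)"

lemma rat_poly_approximableI:
  "uniform_limit S (\<lambda>n. rat_poly_eval (ps n)) g sequentially \<Longrightarrow> rat_poly_approximable S g"
  unfolding rat_poly_approximable_def by blast

lemma rat_poly_approximable_imp_continuous_on:
  assumes "rat_poly_approximable S g"
  shows "continuous_on S g"
proof -
  obtain ps where "uniform_limit S (\<lambda>n. rat_poly_eval (ps n)) g sequentially"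
    using assms unfolding rat_poly_approximable_def by blast
  then show ?thesis
    by (rule uniform_limit_theorem[rotated]) (simp_all add: continuous_on_rat_poly_eval)
qed

lemma rat_poly_approximable_eval: "rat_poly_approximable S (rat_poly_eval p)"
  unfolding rat_poly_approximable_def by (rule exI[of _ "\<lambda>_. p"]) (rule uniform_limit_const)

lemma rat_poly_approximable_add:
  assumes "rat_poly_approximable S g" "rat_poly_approximable S h"
  shows "rat_poly_approximable S (\<lambda>x. g x + h x)"
proof -
  obtain ps qs where ps: "uniform_limit S (\<lambda>n. rat_poly_eval (ps n)) g sequentially"
    and qs: "uniform_limit S (\<lambda>n. rat_poly_eval (qs n)) h sequentially"
    using assms unfolding rat_poly_approximable_def by blast
  have "uniform_limit S (\<lambda>n. rat_poly_eval (RAdd (ps n) (qs n))) (\<lambda>x. g x + h x) sequentially"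
    using uniform_limit_add[OF ps qs, folded rat_poly_eval.simps] .
  then show ?thesis by (rule rat_poly_approximableI)
qed

lemma rat_poly_approximable_mult:
  assumes "compact S" "rat_poly_approximable S g" "rat_poly_approximable S h"
  shows "rat_poly_approximable S (\<lambda>x. g x * h x)"
proof -
  obtain ps qs where ps: "uniform_limit S (\<lambda>n. rat_poly_eval (ps n)) g sequentially"
    and qs: "uniform_limit S (\<lambda>n. rat_poly_eval (qs n)) h sequentially"
    using assms unfolding rat_poly_approximable_def by blast
  have bounded: "bounded (g ` S)" "bounded (h ` S)"
    using assms by (auto intro!: compact_imp_bounded compact_continuous_image
                         rat_poly_approximable_imp_continuous_on)
  have "uniform_limit S (\<lambda>n. rat_poly_eval (RMult (ps n) (qs n))) (\<lambda>x. g x * h x) sequentially"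
    using uniform_lim_mult[OF ps qs bounded, folded rat_poly_eval.simps] .
  then show ?thesis by (rule rat_poly_approximableI)
qed

lemma rat_poly_approximable_const: "rat_poly_approximable S (\<lambda>_. c)"
proof -
  obtain r where r: "\<forall>n. r n \<in> \<rat>" and "r \<longlonglongrightarrow> c"
    using closure_sequential[of c \<rat>] by (auto simp: Rats_closure_real)
  have "\<forall>n. \<exists>q. r n = of_rat q"
    using r by (blast elim: Rats_cases)
  then obtain q where r_q: "\<And>n. r n = of_rat (q n)"
    by metis
  have eval_RConst: "rat_poly_eval (RConst q') = (\<lambda>_. of_rat q')" for q'
    by (rule ext) simp
  have "uniform_limit S (\<lambda>n _. r n) (\<lambda>_. c) sequentially"
    using \<open>r \<longlonglongrightarrow> c\<close> by (auto intro!: uniform_limitI elim: eventually_mono dest: tendstoD)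
  then have "uniform_limit S (\<lambda>n. rat_poly_eval (RConst (q n))) (\<lambda>_. c) sequentially"
    unfolding eval_RConst r_q .
  then show ?thesis by (rule rat_poly_approximableI)
qed

lemma rat_poly_dense:
  fixes S :: "'e::euclidean_space set"
  assumes "compact S" "continuous_on S f" "e > 0"
  obtains p where "\<forall>x\<in>S. \<bar>f x - rat_poly_eval p x\<bar> < e"
proof -
  interpret function_ring_on "Collect (rat_poly_approximable S)" S
  proof
    fix x y assume "x \<in> S" "y \<in> S" "x \<noteq> y"
    then obtain b where b: "b \<in> Basis" "x \<bullet> b \<noteq> y \<bullet> b"
      using euclidean_eqI[of x y] by blast
    then obtain i where "from_nat_into Basis i = b"
      by (metis countable_finite finite_Basis from_nat_into_surj)
    then have "rat_poly_eval (RVar i) x \<noteq> rat_poly_eval (RVar i) y"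
      using b by simp
    then show "\<exists>g\<in>Collect (rat_poly_approximable S). g x \<noteq> g y"
      using rat_poly_approximable_eval by blast
  qed (use assms in \<open>auto intro: rat_poly_approximable_imp_continuous_on rat_poly_approximable_add
         rat_poly_approximable_mult rat_poly_approximable_const\<close>)
  obtain g where "rat_poly_approximable S g" and g: "\<forall>x\<in>S. \<bar>f x - g x\<bar> < e/2"
    using Stone_Weierstrass_basic[OF assms(2), of "e/2"] assms(3) by auto
  then obtain ps where "uniform_limit S (\<lambda>n. rat_poly_eval (ps n)) g sequentially"
    unfolding rat_poly_approximable_def by blast
  then obtain n where n: "\<forall>x\<in>S. \<bar>rat_poly_eval (ps n) x - g x\<bar> < e/2"
    using assms(3) unfolding uniform_limit_sequentially_iff dist_real_def
    by (metis half_gt_zero order_refl)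
  have "\<bar>f x - rat_poly_eval (ps n) x\<bar> < e" if "x \<in> S" for x
    using g[rule_format, OF that] n[rule_format, OF that] by linarith
  then show ?thesis using that by blast
qed

lemma rat_poly_vector_dense:
  fixes S :: "'e::euclidean_space set" and f :: "'e \<Rightarrow> real^'n"
  assumes "compact S" "continuous_on S f" "e > 0"
  obtains ps :: "rat_poly^'n" where "\<forall>y\<in>S. \<forall>i. \<bar>f y $ i - rat_poly_eval (ps $ i) y\<bar> < e"
proof -
  have "\<exists>p. \<forall>y\<in>S. \<bar>f y $ i - rat_poly_eval p y\<bar> < e" for i
    using rat_poly_dense[OF assms(1) continuous_on_component[OF assms(2)] assms(3)] by blast
  then obtain p where "\<forall>i. \<forall>y\<in>S. \<bar>f y $ i - rat_poly_eval (p i) y\<bar> < e"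
    by metis
  then show ?thesis using that[of "\<chi> i. p i"] by simp
qed

lemma countable_uniformly_dense_continuous_maps:
  fixes K :: "'e::euclidean_space set"
  assumes "compact K" "X homeomorphic_space top_of_set K"
  obtains D :: "('x \<Rightarrow> real^'n) set"
  where "countable D" "\<And>g. g \<in> D \<Longrightarrow> continuous_map X euclidean g"
    and "\<And>f e. continuous_map X euclidean f \<Longrightarrow> e > 0 \<Longrightarrow>
           \<exists>g\<in>D. \<forall>x\<in>topspace X. \<forall>i. \<bar>f x $ i - g x $ i\<bar> < e"
proof -
  obtain h h' where "homeomorphic_maps X (top_of_set K) h h'"
    using assms(2) unfolding homeomorphic_space_def by blast
  then have h: "continuous_map X (top_of_set K) h" and h': "continuous_map (top_of_set K) X h'"
    and h'_h: "\<And>x. x \<in> topspace X \<Longrightarrow> h' (h x) = x"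
    by (auto simp: homeomorphic_maps_def)
  have h_K: "\<And>x. x \<in> topspace X \<Longrightarrow> h x \<in> K"
    using h by (auto simp: continuous_map_def)
  define G where "G ps = (\<lambda>y. \<chi> i. rat_poly_eval (ps $ i) y) \<circ> h" for ps :: "rat_poly^'n"
  show ?thesis
  proof (rule that[of "range G"])
    show "countable (range G)" by simp
    show "continuous_map X euclidean g" if g: "g \<in> range G" for g
    proof -
      obtain ps where "g = G ps" using g by blast
      have "continuous_on K (\<lambda>y. \<chi> i. rat_poly_eval (ps $ i) y)"
        by (intro continuous_on_vec_lambda continuous_on_rat_poly_eval)
      then have "continuous_map (top_of_set K) euclidean (\<lambda>y. \<chi> i. rat_poly_eval (ps $ i) y)"
        by simp
      then show ?thesis
        unfolding \<open>g = G ps\<close> G_def by (rule continuous_map_compose[OF h])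
    qed
    fix f :: "'x \<Rightarrow> real^'n" and e :: real
    assume f: "continuous_map X euclidean f" and "e > 0"
    have "continuous_on K (f \<circ> h')"
      using continuous_map_compose[OF h' f] by simp
    then obtain ps where ps: "\<forall>y\<in>K. \<forall>i. \<bar>(f \<circ> h') y $ i - rat_poly_eval (ps $ i) y\<bar> < e"
      using rat_poly_vector_dense[OF assms(1) _ \<open>e > 0\<close>] by blast
    have "\<bar>f x $ i - G ps x $ i\<bar> < e" if "x \<in> topspace X" for x i
      using ps[rule_format, OF h_K[OF that]] h'_h[OF that] by (simp add: G_def)
    then show "\<exists>g\<in>range G. \<forall>x\<in>topspace X. \<forall>i. \<bar>f x $ i - g x $ i\<bar> < e"
      by blast
  qed
qed

lemma finitely_triangulable_imp_compact_model:
  assumes "finitely_triangulable TYPE('e::euclidean_space) X"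
  obtains K :: "'e::euclidean_space set" where "compact K" "X homeomorphic_space top_of_set K"
proof -
  obtain T :: "'e set set" where T: "triangulation T"
    and "X homeomorphic_space top_of_set (\<Union>T)"
    using assms unfolding finitely_triangulable_def by blast
  moreover have "compact (\<Union>T)"
    using T by (intro compact_Union) (auto intro: compact_simplex simp: triangulation_def)
  ultimately show ?thesis using that by blast
qed

lemma interleaved_by_inclusions:
  fixes Z B :: "real^'n \<Rightarrow> ('b \<Rightarrow> 'k::field) set"
  assumes "\<And>s. Z s \<subseteq> Z' (shiftv e s)" "\<And>s. B s \<subseteq> B' (shiftv e s)"
    and "\<And>s. Z' s \<subseteq> Z (shiftv e s)" "\<And>s. B' s \<subseteq> B (shiftv e s)"
    and "\<And>s. (\<lambda>_. 0) \<in> B s" "\<And>s. (\<lambda>_. 0) \<in> B' s"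
  shows "interleaved e (Z, B) (Z', B')"
  unfolding interleaved_def pm_hom_def
  by (intro exI[of _ "\<lambda>s x. x"])
     (auto simp: qsub_def intro: assms(1-4)[THEN subsetD] assms(5,6))

lemma zero_in_kboundaries: "(\<lambda>_. 0) \<in> kboundaries p X"
  unfolding kboundaries_def
  by (rule image_eqI[of _ _ "\<lambda>_. 0"]) (simp_all add: kbd_def kchains_def)

lemma kchains_subtopology_mono:
  "A \<subseteq> B \<Longrightarrow> kchains p (subtopology X A) \<subseteq> kchains p (subtopology X B)"
  by (auto simp: kchains_def singular_simplex_subtopology)

lemma kcycles_subtopology_mono:
  "A \<subseteq> B \<Longrightarrow> kcycles p (subtopology X A) \<subseteq> kcycles p (subtopology X B)"
  using kchains_subtopology_mono by (fastforce simp: kcycles_def)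

lemma kboundaries_subtopology_mono:
  "A \<subseteq> B \<Longrightarrow> kboundaries p (subtopology X A) \<subseteq> kboundaries p (subtopology X B)"
  unfolding kboundaries_def by (intro image_mono kchains_subtopology_mono)

lemma sublevel_subset_shiftv:
  assumes "\<And>x i. x \<in> topspace X \<Longrightarrow> g x $ i \<le> f x $ i + e"
  shows "sublevel X f s \<subseteq> sublevel X g (shiftv e s)"
proof
  fix x assume "x \<in> sublevel X f s"
  then have x: "x \<in> topspace X" and f_less: "\<And>i. f x $ i < s $ i"
    by (auto simp: sublevel_def)
  have "g x $ i < s $ i + e" for i
    using f_less[of i] assms[OF x, of i] by linarith
  with x show "x \<in> sublevel X g (shiftv e s)"
    by (simp add: sublevel_def shiftv_def)
qed

lemma interleaved_PH_if_uniformly_close: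
  assumes "\<forall>x\<in>topspace X. \<forall>i. \<bar>f x $ i - g x $ i\<bar> \<le> e"
  shows "interleaved e (PH TYPE('k::field) k X f) (PH TYPE('k) k X g)"
proof -
  have "g x $ i \<le> f x $ i + e" "f x $ i \<le> g x $ i + e" if "x \<in> topspace X" for x i
    using assms[rule_format, OF that, of i] by linarith+
  then have f_g: "sublevel X f s \<subseteq> sublevel X g (shiftv e s)"
    and g_f: "sublevel X g s \<subseteq> sublevel X f (shiftv e s)" for s
    by (simp_all add: sublevel_subset_shiftv)
  show ?thesis
    unfolding PH_def
    by (intro interleaved_by_inclusions kcycles_subtopology_mono kboundaries_subtopology_mono
        f_g g_f zero_in_kboundaries)
qed

lemma interleaving_dist_PH_le:
  assumes "e \<ge> 0" "\<forall>x\<in>topspace X. \<forall>i. \<bar>f x $ i - g x $ i\<bar> \<le> e"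
  shows "interleaving_dist (PH TYPE('k::field) k X f) (PH TYPE('k) k X g) \<le> ereal e"
proof -
  have "ereal e \<in> {ereal e' | e'. e' \<ge> 0 \<and> interleaved e' (PH TYPE('k) k X f) (PH TYPE('k) k X g)}"
    using assms interleaved_PH_if_uniformly_close[OF assms(2)] by blast
  then show ?thesis unfolding interleaving_dist_def by (rule Inf_lower)
qed

theorem proposition5p6:
  fixes X :: "'x topology" and k :: nat
  assumes "finitely_triangulable TYPE('e::euclidean_space) X"
  shows "\<exists>D. countable D \<and> D \<subseteq> {g :: 'x \<Rightarrow> real^'n. continuous_map X euclidean g} \<and>
           (\<forall>f :: 'x \<Rightarrow> real^'n. continuous_map X euclidean f \<longrightarrow>
              (\<forall>e>0. \<exists>g\<in>D. interleaving_dist (PH TYPE('k::field) k X f) (PH TYPE('k) k X g) < ereal e))"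
proof -
  obtain K :: "'e set" where K: "compact K" "X homeomorphic_space top_of_set K"
    using finitely_triangulable_imp_compact_model[OF assms] .
  obtain D :: "('x \<Rightarrow> real^'n) set"
    where D: "countable D" "\<And>g. g \<in> D \<Longrightarrow> continuous_map X euclidean g"
      and dense: "\<And>f e. continuous_map X euclidean f \<Longrightarrow> e > 0 \<Longrightarrow>
                    \<exists>g\<in>D. \<forall>x\<in>topspace X. \<forall>i. \<bar>f x $ i - g x $ i\<bar> < e"
    using countable_uniformly_dense_continuous_maps[OF K] by blast
  have approx: "\<exists>g\<in>D. interleaving_dist (PH TYPE('k) k X f) (PH TYPE('k) k X g) < ereal e"
    if f: "continuous_map X euclidean f" and "e > 0" for f and e :: real
  proof -
    obtain g where "g \<in> D" and close: "\<forall>x\<in>topspace X. \<forall>i. \<bar>f x $ i - g x $ i\<bar> < e/2"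
      using dense[OF f, of "e/2"] \<open>e > 0\<close> by auto
    have "\<forall>x\<in>topspace X. \<forall>i. \<bar>f x $ i - g x $ i\<bar> \<le> e/2"
      using close less_imp_le by blast
    then have "interleaving_dist (PH TYPE('k) k X f) (PH TYPE('k) k X g) \<le> ereal (e/2)"
      using \<open>e > 0\<close> by (intro interleaving_dist_PH_le) simp_all
    also have "\<dots> < ereal e" using \<open>e > 0\<close> by simp
    finally show ?thesis using \<open>g \<in> D\<close> by blast
  qed
  show ?thesis
  proof (intro exI[of _ D] conjI allI impI)
    show "countable D" by (rule D(1))
    show "D \<subseteq> {g. continuous_map X euclidean g}" using D(2) by blast
  qed (rule approx)
qed

end
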